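(* Suppose the noisy label $\tilde Y$ does not have the same distribution as the clean label $Y$. Then there exists a score function $s$ such that $$\mathbb P\big(Y_{\rm test}\in\widehat{\mathcal C}_{\rm noisy}(X_{\rm test})\big)<\mathbb P\big(Y_{\rm test}\in\widehat{\mathcal C}(X_{\rm test})\big).$$ Here $\widehat{\mathcal C}_{\rm noisy}$ is built from the noisy calibration samples and $\widehat{\mathcal C}$ from the clean calibration samples, both with the same score $s$ and level $\alpha$.
   Context: Let $(X_i,Y_i)$, $i=1,\dots,n$, and $(X_{\rm test},Y_{\rm test})$ be i.i.d. Noisy labels $\tilde Y_i=g(Y_i,U_i)$ are produced by a random corruption function $g$ with independent seeds $U_i\sim\mathrm{Unif}[0,1]$. For a score $s:\mathcal X\times\mathcal Y\to\mathbb R$ and level $\alpha\in(0,1)$: - $\hat q_{\rm clean}$ is the $\lceil(n+1)(1-\alpha)\rceil$-th smallest of $s(X_i,Y_i)$, and $\widehat{\mathcal C}(x)=\{y:s(x,y)\le\hat q_{\rm clean}\}$. - $\hat q_{\rm noisy}$ is the $\lceil(n+1)(1-\alpha)\rceil$-th smallest of $s(X_i,\tilde Y_i)$, and $\widehat{\mathcal C}_{\rm noisy}(x)=\{y:s(x,y)\le\hat q_{\rm noisy}\}$. *)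

theory Defs
  imports "HOL-Probability.Probability"
begin

definition unif01 :: "real measure" where
  "unif01 = uniform_measure lborel {0..1}"

definition kth_smallest :: "nat \<Rightarrow> real list \<Rightarrow> real" where
  "kth_smallest k xs = sort xs ! (k - 1)"

definition conf_rank :: "nat \<Rightarrow> real \<Rightarrow> nat" where
  "conf_rank n \<alpha> = nat \<lceil>(real n + 1) * (1 - \<alpha>)\<rceil>"

text \<open>Joint sample space: pairs (X_i,Y_i) for i = 0..n-1 (calibration) and i = n (test),
  all i.i.d. with law D, together with independent seeds U_0..U_(n-1) ~ Unif[0,1].\<close>
definition sample_space :: "('x \<times> 'y) measure \<Rightarrow> nat \<Rightarrow> ((nat \<Rightarrow> 'x \<times> 'y) \<times> (nat \<Rightarrow> real)) measure" where
  "sample_space D n = (PiM {..n} (\<lambda>_. D)) \<Otimes>\<^sub>M (PiM {..<n} (\<lambda>_. unif01))"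

definition cov_clean :: "('x \<times> 'y) measure \<Rightarrow> nat \<Rightarrow> real \<Rightarrow> ('x \<Rightarrow> 'y \<Rightarrow> real) \<Rightarrow> real" where
  "cov_clean D n \<alpha> s = measure (sample_space D n)
     {\<omega> \<in> space (sample_space D n).
        case_prod s (fst \<omega> n) \<le> kth_smallest (conf_rank n \<alpha>) (map (\<lambda>i. case_prod s (fst \<omega> i)) [0..<n])}"

definition cov_noisy :: "('x \<times> 'y) measure \<Rightarrow> ('y \<Rightarrow> real \<Rightarrow> 'y) \<Rightarrow> nat \<Rightarrow> real \<Rightarrow> ('x \<Rightarrow> 'y \<Rightarrow> real) \<Rightarrow> real" where
  "cov_noisy D g n \<alpha> s = measure (sample_space D n)
     {\<omega> \<in> space (sample_space D n).
        case_prod s (fst \<omega> n) \<le> kth_smallest (conf_rank n \<alpha>)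
          (map (\<lambda>i. s (fst (fst \<omega> i)) (g (snd (fst \<omega> i)) (snd \<omega> i))) [0..<n])}"

end

theory Submission
  imports Defs
begin

text \<open>Since the two label laws differ, some event A is strictly more likely for the noisy
  label than for the clean one: P(Y \<in> A) = p < q = P(g(Y, U) \<in> A). Take the score that is 0 on
  A and 1 off A. The test point is then covered iff its label lies in A or fewer than
  k = conf_rank n \<alpha> calibration scores vanish, so the coverage is p + (1 - p) P(Bin(n, r) < k),
  where r is p for clean and q for noisy calibration. The upper binomial tail
  P(Bin(n, r) \<ge> k) is strictly increasing in r for 0 < k \<le> n, which makes the noisy
  coverage strictly smaller.\<close>

lemma measure_bind_bernoulli_pmf:
  assumes "0 \<le> q" "q \<le> 1"
  shows "measure_pmf.prob (bernoulli_pmf q \<bind> F) E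
         = q * measure_pmf.prob (F True) E + (1 - q) * measure_pmf.prob (F False) E"
proof -
  have "measure_pmf.prob (bernoulli_pmf q \<bind> F) E = (\<integral>b. measure_pmf.prob (F b) E \<partial>bernoulli_pmf q)"
    unfolding measure_pmf_bind
    by (rule measure_pmf.measure_bind[where N="count_space UNIV"]) (auto simp: measure_pmf_in_subprob_algebra)
  then show ?thesis using assms by (simp add: algebra_simps)
qed

definition binomial_tail :: "nat \<Rightarrow> real \<Rightarrow> nat \<Rightarrow> real" where
  "binomial_tail n q k = measure_pmf.prob (binomial_pmf n q) {k..}"

lemma binomial_tail_0 [simp]: "binomial_tail n q 0 = 1"
  by (simp add: binomial_tail_def)

lemma binomial_tail_Suc_le: "binomial_tail n q (Suc k) \<le> binomial_tail n q k"
  unfolding binomial_tail_def by (rule measure_pmf.finite_measure_mono) auto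

lemma binomial_tail_eq_0: "0 \<le> q \<Longrightarrow> q \<le> 1 \<Longrightarrow> n < k \<Longrightarrow> binomial_tail n q k = 0"
  unfolding binomial_tail_def measure_pmf_zero_iff
  by (auto simp: set_pmf_binomial_eq split: if_splits)

lemma binomial_tail_one: "k \<le> n \<Longrightarrow> binomial_tail n 1 k = 1"
  unfolding binomial_tail_def by (simp add: measure_pmf.prob_eq_1 AE_measure_pmf_iff)

lemma binomial_tail_less_1:
  assumes "0 \<le> q" "q < 1" "0 < k"
  shows "binomial_tail n q k < 1"
proof -
  have "binomial_tail n q k \<le> measure_pmf.prob (binomial_pmf n q) (UNIV - {0})"
    unfolding binomial_tail_def using assms by (intro measure_pmf.finite_measure_mono) auto
  also have "\<dots> = 1 - pmf (binomial_pmf n q) 0"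
    using measure_pmf.prob_compl[of "{0}" "binomial_pmf n q"] by (simp add: measure_pmf_single)
  also have "\<dots> < 1" using assms by simp
  finally show ?thesis .
qed

lemma binomial_tail_Suc_Suc:
  assumes "0 \<le> q" "q \<le> 1"
  shows "binomial_tail (Suc n) q (Suc k) = q * binomial_tail n q k + (1 - q) * binomial_tail n q (Suc k)"
proof -
  have "binomial_pmf (Suc n) q
          = bernoulli_pmf q \<bind> (\<lambda>b. map_pmf (\<lambda>j. (if b then 1 else 0) + j) (binomial_pmf n q))"
    using assms by (simp add: binomial_pmf_Suc map_pmf_def)
  then show ?thesis
    unfolding binomial_tail_def using assms
    by (simp add: measure_bind_bernoulli_pmf measure_map_pmf vimage_def atLeast_def)
qed

lemma convex_combination_mono:
  fixes a b q q' :: real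
  assumes "b \<le> a" "q \<le> q'"
  shows "q * a + (1 - q) * b \<le> q' * a + (1 - q') * b"
proof -
  have "0 \<le> (q' - q) * (a - b)" using assms by simp
  then show ?thesis by (simp add: algebra_simps)
qed

lemma binomial_tail_mono:
  assumes "0 \<le> q" "q \<le> q'" "q' \<le> 1"
  shows "binomial_tail n q k \<le> binomial_tail n q' k"
  using assms
proof (induction n arbitrary: k)
  case 0
  then show ?case by (cases k) (simp_all add: binomial_tail_eq_0)
next
  case (Suc n)
  show ?case
  proof (cases k)
    case (Suc j)
    have "q * binomial_tail n q j + (1 - q) * binomial_tail n q (Suc j)
        \<le> q' * binomial_tail n q j + (1 - q') * binomial_tail n q (Suc j)"
      using Suc.prems by (intro convex_combination_mono binomial_tail_Suc_le)
    also have "\<dots> \<le> q' * binomial_tail n q' j + (1 - q') * binomial_tail n q' (Suc j)"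
      using Suc.IH Suc.prems by (intro add_mono mult_left_mono) auto
    finally show ?thesis
      using Suc Suc.prems by (simp add: binomial_tail_Suc_Suc)
  qed simp
qed

lemma binomial_tail_top:
  assumes "0 \<le> q" "q \<le> 1"
  shows "binomial_tail n q n = q ^ n"
  by (induction n) (use assms in \<open>simp_all add: binomial_tail_Suc_Suc binomial_tail_eq_0\<close>)

lemma binomial_tail_strict_mono:
  assumes "0 \<le> q" "q < q'" "q' \<le> 1" "0 < k" "k \<le> n"
  shows "binomial_tail n q k < binomial_tail n q' k"
  using assms
proof (induction n arbitrary: k)
  case (Suc n)
  then obtain j where k: "k = Suc j" by (cases k) auto
  consider "k = Suc n" | "q' = 1" | "Suc j \<le> n" "q' < 1"
    using Suc.prems k by linarith
  then show ?case
  proof cases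
    case 1
    then show ?thesis
      using Suc.prems power_strict_mono[of q q' "Suc n"] by (simp add: binomial_tail_top)
  next
    case 2
    then show ?thesis
      using Suc.prems binomial_tail_less_1[of q k "Suc n"] binomial_tail_one[of k "Suc n"] by simp
  next
    case 3
    have "q * binomial_tail n q j + (1 - q) * binomial_tail n q (Suc j)
        \<le> q' * binomial_tail n q j + (1 - q') * binomial_tail n q (Suc j)"
      using Suc.prems by (intro convex_combination_mono binomial_tail_Suc_le) auto
    also have "\<dots> < q' * binomial_tail n q' j + (1 - q') * binomial_tail n q' (Suc j)"
    proof -
      have "q' * binomial_tail n q j \<le> q' * binomial_tail n q' j"
        using Suc.prems by (intro mult_left_mono binomial_tail_mono) auto
      moreover have "(1 - q') * binomial_tail n q (Suc j) < (1 - q') * binomial_tail n q' (Suc j)"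
        using Suc.IH[of "Suc j"] Suc.prems 3 by (intro mult_strict_left_mono) auto
      ultimately show ?thesis by linarith
    qed
    finally show ?thesis
      using k Suc.prems by (simp add: binomial_tail_Suc_Suc)
  qed
qed simp

lemma kth_smallest_01_list:
  fixes xs :: "real list"
  assumes "set xs \<subseteq> {0, 1}" "0 < k" "k \<le> length xs"
  shows "kth_smallest k xs = (if k \<le> length (filter (\<lambda>x. x = 0) xs) then 0 else 1)"
proof -
  let ?zeros = "filter (\<lambda>x. x = 0) xs" and ?ones = "filter (\<lambda>x. x \<noteq> 0) xs"
  have ones: "\<forall>x\<in>set ?ones. x = 1" using assms(1) by auto
  have sort_eq: "sort xs = ?zeros @ ?ones"
  proof (rule properties_for_sort)
    have "replicate (length ?ones) 1 = ?ones" "replicate (length ?zeros) 0 = ?zeros"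
      using ones by (auto intro: replicate_length_same)
    then have "sorted ?zeros" "sorted ?ones" by (metis sorted_replicate)+
    then show "sorted (?zeros @ ?ones)"
      using ones by (auto simp: sorted_append)
  qed simp
  have len: "length ?zeros + length ?ones = length xs"
    by (simp add: sum_length_filter_compl)
  show ?thesis
  proof (cases "k \<le> length ?zeros")
    case True
    then have "?zeros ! (k - 1) \<in> set ?zeros" using assms by (intro nth_mem) auto
    then show ?thesis using True assms unfolding kth_smallest_def sort_eq
      by (auto simp: nth_append)
  next
    case False
    then have "?ones ! (k - 1 - length ?zeros) \<in> set ?ones" using assms len by (intro nth_mem) auto
    then show ?thesis using False assms ones unfolding kth_smallest_def sort_eq
      by (auto simp: nth_append)
  qed
qed

lemma le_kth_smallest_indicators_iff:
  assumes "0 < k" "k \<le> n"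
  shows "(if T then 0 else 1) \<le> kth_smallest k (map (\<lambda>i. if P i then 0 else 1) [0..<n])
     \<longleftrightarrow> T \<or> card {i\<in>{..<n}. P i} < k"
proof -
  have "length (filter (\<lambda>x. x = 0) (map (\<lambda>i. if P i then (0::real) else 1) [0..<n]))
      = card {i\<in>{..<n}. P i}"
    unfolding length_filter_conv_card by (intro arg_cong[where f=card]) (auto split: if_splits)
  then show ?thesis
    using assms by (subst kth_smallest_01_list) auto
qed

lemma prob_space_unif01: "prob_space unif01"
  unfolding unif01_def by (rule prob_space_uniform_measure) auto

lemma prob_space_sample_space: "prob_space D \<Longrightarrow> prob_space (sample_space D n)"
  unfolding sample_space_def by (intro prob_space_pair prob_space_PiM) (auto intro: prob_space_unif01)

lemma measurable_pair_PiM_component: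
  fixes n :: nat
  assumes "i < n"
  shows "(\<lambda>\<omega>. (fst \<omega> i, snd \<omega> i))
           \<in> measurable (PiM {..n} (\<lambda>_. M) \<Otimes>\<^sub>M PiM {..<n} (\<lambda>_. N)) (M \<Otimes>\<^sub>M N)"
proof -
  have "i \<in> {..n}" "i \<in> {..<n}" using assms by auto
  then show ?thesis
    by (intro measurable_Pair measurable_compose[OF measurable_fst measurable_component_singleton]
        measurable_compose[OF measurable_snd measurable_component_singleton])
qed

lemma pair_PiM_cylinder_in_sets:
  fixes n :: nat
  assumes K: "\<And>i. i < n \<Longrightarrow> K i \<in> sets (M \<Otimes>\<^sub>M N)" and L: "L \<in> sets M"
  shows "{\<omega> \<in> space (PiM {..n} (\<lambda>_. M) \<Otimes>\<^sub>M PiM {..<n} (\<lambda>_. N)).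
            (\<forall>i<n. (fst \<omega> i, snd \<omega> i) \<in> K i) \<and> fst \<omega> n \<in> L}
         \<in> sets (PiM {..n} (\<lambda>_. M) \<Otimes>\<^sub>M PiM {..<n} (\<lambda>_. N))"
proof -
  let ?S = "PiM {..n} (\<lambda>_. M) \<Otimes>\<^sub>M PiM {..<n} (\<lambda>_. N)"
  have "Measurable.pred ?S (\<lambda>\<omega>. (fst \<omega> i, snd \<omega> i) \<in> K i)" if "i \<in> {..<n}" for i
    using that K[of i] measurable_pair_PiM_component[of i n M N] by (intro pred_sets2) auto
  moreover have "Measurable.pred ?S (\<lambda>\<omega>. fst \<omega> n \<in> L)"
    by (intro pred_sets2[OF L] measurable_compose[OF measurable_fst measurable_component_singleton]) simp
  ultimately have "Measurable.pred ?S (\<lambda>\<omega>. (\<forall>i\<in>{..<n}. (fst \<omega> i, snd \<omega> i) \<in> K i) \<and> fst \<omega> n \<in> L)"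
    by (intro pred_intros_logic pred_intros_finite) auto
  then show ?thesis
    unfolding pred_def Ball_def lessThan_iff .
qed

lemma emeasure_pair_PiM_cylinder:
  fixes n :: nat
  assumes "prob_space M" "prob_space N"
    and K: "\<And>i. i < n \<Longrightarrow> K i \<in> sets (M \<Otimes>\<^sub>M N)" and L: "L \<in> sets M"
  shows "emeasure (PiM {..n} (\<lambda>_. M) \<Otimes>\<^sub>M PiM {..<n} (\<lambda>_. N))
           {\<omega> \<in> space (PiM {..n} (\<lambda>_. M) \<Otimes>\<^sub>M PiM {..<n} (\<lambda>_. N)).
              (\<forall>i<n. (fst \<omega> i, snd \<omega> i) \<in> K i) \<and> fst \<omega> n \<in> L}
         = (\<Prod>i<n. emeasure (M \<Otimes>\<^sub>M N) (K i)) * emeasure M L"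
proof -
  interpret M: prob_space M by fact
  interpret N: prob_space N by fact
  interpret PN: prob_space "PiM {..<n} (\<lambda>_. N)" by (rule prob_space_PiM) (use assms in auto)
  interpret PM: product_sigma_finite "\<lambda>_::nat. M"
    by (simp add: product_sigma_finite_def M.sigma_finite_measure_axioms)
  interpret PN': product_sigma_finite "\<lambda>_::nat. N"
    by (simp add: product_sigma_finite_def N.sigma_finite_measure_axioms)
  let ?P = "PiM {..n} (\<lambda>_. M)" and ?Q = "PiM {..<n} (\<lambda>_. N)"
  let ?C = "{\<omega> \<in> space (?P \<Otimes>\<^sub>M ?Q). (\<forall>i<n. (fst \<omega> i, snd \<omega> i) \<in> K i) \<and> fst \<omega> n \<in> L}"
  let ?f = "\<lambda>i x. if i < n then emeasure N (Pair x -` K i) else indicator L x"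
  have "emeasure (?P \<Otimes>\<^sub>M ?Q) ?C = (\<integral>\<^sup>+a. emeasure ?Q (Pair a -` ?C) \<partial>?P)"
    by (rule PN.emeasure_pair_measure_alt[OF pair_PiM_cylinder_in_sets[OF K L]])
  also have "\<dots> = (\<integral>\<^sup>+a. (\<Prod>i\<in>{..n}. ?f i (a i)) \<partial>?P)"
  proof (rule nn_integral_cong)
    fix a assume a: "a \<in> space ?P"
    show "emeasure ?Q (Pair a -` ?C) = (\<Prod>i\<in>{..n}. ?f i (a i))"
    proof (cases "a n \<in> L")
      case True
      have "Pair a -` ?C = PiE {..<n} (\<lambda>i. Pair (a i) -` K i)"
        using a True K[THEN sets.sets_into_space]
        by (auto simp: space_pair_measure space_PiM PiE_iff subset_eq extensional_def)
          (meson SigmaD2 lessThan_iff)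
      moreover have "emeasure ?Q (PiE {..<n} (\<lambda>i. Pair (a i) -` K i))
          = (\<Prod>i<n. emeasure N (Pair (a i) -` K i))"
        by (rule PN'.emeasure_PiM) (auto intro: sets_Pair1 K)
      ultimately show ?thesis
        using True by (simp add: lessThan_Suc_atMost[symmetric])
    next
      case False
      then have "Pair a -` ?C = {}" by auto
      then show ?thesis using False by (simp add: lessThan_Suc_atMost[symmetric])
    qed
  qed
  also have "\<dots> = (\<Prod>i\<in>{..n}. \<integral>\<^sup>+x. ?f i x \<partial>M)"
  proof (rule PM.product_nn_integral_prod)
    show "?f i \<in> borel_measurable M" if "i \<in> {..n}" for i
      by (cases "i < n") (simp_all add: N.measurable_emeasure_Pair K L borel_measurable_indicator)
  qed simp
  also have "\<dots> = (\<Prod>i\<in>{..n}. if i < n then emeasure (M \<Otimes>\<^sub>M N) (K i) else emeasure M L)"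
    by (intro prod.cong refl) (auto simp: N.emeasure_pair_measure_alt[OF K] L)
  also have "\<dots> = (\<Prod>i<n. emeasure (M \<Otimes>\<^sub>M N) (K i)) * emeasure M L"
    by (simp add: lessThan_Suc_atMost[symmetric])
  finally show ?thesis .
qed

lemma pred_eq_bool_in_sets:
  assumes "{x\<in>space M. P x} \<in> sets M"
  shows "{x\<in>space M. P x = b} \<in> sets M"
proof (cases b)
  case False
  then have "{x\<in>space M. P x = b} = space M - {x\<in>space M. P x}" by auto
  then show ?thesis using assms by auto
qed (use assms in simp)

lemma (in prob_space) prob_pred_eq_bool:
  assumes "{x\<in>space M. P x} \<in> events"
  shows "prob {x\<in>space M. P x = b} = pmf (bernoulli_pmf (prob {x\<in>space M. P x})) b"
proof (cases b)
  case False
  then have "{x\<in>space M. P x = b} = space M - {x\<in>space M. P x}" by auto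
  then show ?thesis using prob_compl[OF assms] False by simp
qed simp

text \<open>Bit i < n of the pattern records the event C for the i-th calibration pair and its
  seed, bit n the event T for the test pair; under the sample space these bits are independent
  Bernoulli variables.\<close>

definition outcome_pattern ::
    "nat \<Rightarrow> ('a \<times> real \<Rightarrow> bool) \<Rightarrow> ('a \<Rightarrow> bool) \<Rightarrow> (nat \<Rightarrow> 'a) \<times> (nat \<Rightarrow> real) \<Rightarrow> nat \<Rightarrow> bool" where
  "outcome_pattern n C T \<omega> i = (if i < n then C (fst \<omega> i, snd \<omega> i) else i = n \<and> T (fst \<omega> n))"

lemma outcome_pattern_level_set:
  assumes "\<tau> \<in> PiE_dflt {..n} False (\<lambda>_. UNIV)"
  shows "{\<omega>\<in>space (sample_space D n). outcome_pattern n C T \<omega> = \<tau>}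
       = {\<omega>\<in>space (sample_space D n).
            (\<forall>i<n. (fst \<omega> i, snd \<omega> i) \<in> {x\<in>space (D \<Otimes>\<^sub>M unif01). C x = \<tau> i})
            \<and> fst \<omega> n \<in> {x\<in>space D. T x = \<tau> n}}"
  using assms
  by (auto simp: sample_space_def space_pair_measure space_PiM PiE_iff PiE_dflt_def
      outcome_pattern_def fun_eq_iff) (metis le_neq_implies_less)

lemma outcome_pattern_level_set_in_sets:
  assumes C: "{x\<in>space (D \<Otimes>\<^sub>M unif01). C x} \<in> sets (D \<Otimes>\<^sub>M unif01)"
    and T: "{x\<in>space D. T x} \<in> sets D"
    and \<tau>: "\<tau> \<in> PiE_dflt {..n} False (\<lambda>_. UNIV)"
  shows "{\<omega>\<in>space (sample_space D n). outcome_pattern n C T \<omega> = \<tau>} \<in> sets (sample_space D n)"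
  unfolding outcome_pattern_level_set[OF \<tau>] unfolding sample_space_def
  by (intro pair_PiM_cylinder_in_sets pred_eq_bool_in_sets C T)

lemma measure_outcome_pattern_eq:
  assumes D: "prob_space D"
    and C: "{x\<in>space (D \<Otimes>\<^sub>M unif01). C x} \<in> sets (D \<Otimes>\<^sub>M unif01)"
    and T: "{x\<in>space D. T x} \<in> sets D"
    and \<tau>: "\<tau> \<in> PiE_dflt {..n} False (\<lambda>_. UNIV)"
  shows "measure (sample_space D n) {\<omega>\<in>space (sample_space D n). outcome_pattern n C T \<omega> = \<tau>}
       = pmf (Pi_pmf {..n} False (\<lambda>i. bernoulli_pmf (if i < n
            then measure (D \<Otimes>\<^sub>M unif01) {x\<in>space (D \<Otimes>\<^sub>M unif01). C x}
            else measure D {x\<in>space D. T x}))) \<tau>"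
proof -
  interpret D: prob_space D by fact
  interpret DU: prob_space "D \<Otimes>\<^sub>M unif01"
    by (intro prob_space_pair D prob_space_unif01)
  let ?S = "sample_space D n"
  define K where "K i = {x\<in>space (D \<Otimes>\<^sub>M unif01). C x = \<tau> i}" for i
  define L where "L = {x\<in>space D. T x = \<tau> n}"
  have K: "K i \<in> sets (D \<Otimes>\<^sub>M unif01)" for i
    unfolding K_def by (rule pred_eq_bool_in_sets[OF C])
  have L: "L \<in> sets D"
    unfolding L_def by (rule pred_eq_bool_in_sets[OF T])
  have "emeasure ?S {\<omega>\<in>space ?S. outcome_pattern n C T \<omega> = \<tau>}
      = (\<Prod>i<n. emeasure (D \<Otimes>\<^sub>M unif01) (K i)) * emeasure D L"
    unfolding outcome_pattern_level_set[OF \<tau>] K_def[symmetric] L_def[symmetric]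
    unfolding sample_space_def
    by (rule emeasure_pair_PiM_cylinder[OF D prob_space_unif01 K L])
  also have "\<dots> = ennreal ((\<Prod>i<n. DU.prob (K i)) * D.prob L)"
    by (simp add: DU.emeasure_eq_measure D.emeasure_eq_measure prod_ennreal ennreal_mult prod_nonneg)
  finally have "measure ?S {\<omega>\<in>space ?S. outcome_pattern n C T \<omega> = \<tau>} = (\<Prod>i<n. DU.prob (K i)) * D.prob L"
    by (simp add: measure_def prod_nonneg)
  also have "\<dots> = (\<Prod>i\<in>{..n}. pmf (bernoulli_pmf (if i < n then DU.prob {x\<in>space (D \<Otimes>\<^sub>M unif01). C x}
                                             else D.prob {x\<in>space D. T x})) (\<tau> i))"
    unfolding K_def L_def
    by (simp add: DU.prob_pred_eq_bool[OF C] D.prob_pred_eq_bool[OF T] lessThan_Suc_atMost[symmetric])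
  also have "\<dots> = pmf (Pi_pmf {..n} False (\<lambda>i. bernoulli_pmf (if i < n
            then DU.prob {x\<in>space (D \<Otimes>\<^sub>M unif01). C x} else D.prob {x\<in>space D. T x}))) \<tau>"
    using \<tau> by (intro pmf_Pi'[symmetric]) (auto simp: PiE_dflt_def)
  finally show ?thesis .
qed

lemma measure_outcome_pattern_in:
  assumes D: "prob_space D"
    and C: "{x\<in>space (D \<Otimes>\<^sub>M unif01). C x} \<in> sets (D \<Otimes>\<^sub>M unif01)"
    and T: "{x\<in>space D. T x} \<in> sets D"
  shows "measure (sample_space D n) {\<omega>\<in>space (sample_space D n). outcome_pattern n C T \<omega> \<in> E}
       = measure_pmf.prob (Pi_pmf {..n} False (\<lambda>i. bernoulli_pmf (if i < n
            then measure (D \<Otimes>\<^sub>M unif01) {x\<in>space (D \<Otimes>\<^sub>M unif01). C x}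
            else measure D {x\<in>space D. T x}))) E"
    (is "measure ?S _ = measure_pmf.prob ?B E")
proof -
  interpret S: prob_space ?S by (rule prob_space_sample_space[OF D])
  define P :: "(nat \<Rightarrow> bool) set" where "P = PiE_dflt {..n} False (\<lambda>_. UNIV)"
  define A where "A \<tau> = {\<omega>\<in>space ?S. outcome_pattern n C T \<omega> = \<tau>}" for \<tau>
  have P: "finite P" unfolding P_def by (intro finite_PiE_dflt) auto
  have "{\<omega>\<in>space ?S. outcome_pattern n C T \<omega> \<in> E} = (\<Union>\<tau>\<in>E \<inter> P. A \<tau>)"
    by (auto simp: A_def P_def PiE_dflt_def outcome_pattern_def)
  moreover have "S.prob (\<Union>\<tau>\<in>E \<inter> P. A \<tau>) = (\<Sum>\<tau>\<in>E \<inter> P. S.prob (A \<tau>))"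
    using P outcome_pattern_level_set_in_sets[OF C T]
    by (intro S.finite_measure_finite_Union) (auto simp: A_def P_def disjoint_family_on_def)
  moreover have "S.prob (A \<tau>) = pmf ?B \<tau>" if "\<tau> \<in> P" for \<tau>
    unfolding A_def using that measure_outcome_pattern_eq[OF D C T] by (simp add: P_def)
  moreover have "measure_pmf.prob ?B (E \<inter> P) = measure_pmf.prob ?B E"
  proof (rule measure_prob_cong_0)
    show "pmf ?B \<tau> = 0" if "\<tau> \<in> E - E \<inter> P" for \<tau>
      using that set_Pi_pmf_subset'[of "{..n}" False]
      by (force simp: P_def PiE_dflt_def set_pmf_eq)
  qed auto
  ultimately show ?thesis
    using P by (simp add: measure_measure_pmf_finite)
qed

lemma prob_Pi_bernoulli_covered:
  assumes q: "0 \<le> q" "q \<le> 1" and p: "0 \<le> p" "p \<le> 1"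
  shows "measure_pmf.prob (Pi_pmf {..n} False (\<lambda>i. bernoulli_pmf (if i < n then q else p)))
           {\<tau>. \<tau> n \<or> card {i\<in>{..<n}. \<tau> i} < k} = p + (1 - p) * (1 - binomial_tail n q k)"
proof -
  let ?Q = "Pi_pmf {..<n} False (\<lambda>_. bernoulli_pmf q)"
  let ?E = "{\<tau>. \<tau> n \<or> card {i\<in>{..<n}. \<tau> i} < k}"
  have "Pi_pmf {..n} False (\<lambda>i. bernoulli_pmf (if i < n then q else p))
      = bernoulli_pmf p \<bind> (\<lambda>b. Pi_pmf {..<n} False (\<lambda>i. bernoulli_pmf (if i < n then q else p))
          \<bind> (\<lambda>f. return_pmf (f(n := b))))"
    using Pi_pmf_insert'[of "{..<n}" n False] by (simp flip: lessThan_Suc_atMost add: lessThan_Suc)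
  also have "Pi_pmf {..<n} False (\<lambda>i. bernoulli_pmf (if i < n then q else p)) = ?Q"
    by (rule Pi_pmf_cong) auto
  finally have split: "Pi_pmf {..n} False (\<lambda>i. bernoulli_pmf (if i < n then q else p))
      = bernoulli_pmf p \<bind> (\<lambda>b. map_pmf (\<lambda>f. f(n := b)) ?Q)"
    unfolding map_pmf_def .
  have "(\<lambda>f. f(n := True)) -` ?E = UNIV" by auto
  then have covered: "measure_pmf.prob (map_pmf (\<lambda>f. f(n := True)) ?Q) ?E = 1"
    by (simp add: measure_map_pmf)
  have "{i\<in>{..<n}. (f(n := False)) i} = {i\<in>{..<n}. f i}" for f :: "nat \<Rightarrow> bool"
    by auto
  then have "(\<lambda>f. f(n := False)) -` ?E = (\<lambda>f. card {i\<in>{..<n}. f i}) -` {..<k}"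
    by auto
  then have "measure_pmf.prob (map_pmf (\<lambda>f. f(n := False)) ?Q) ?E
      = measure_pmf.prob (map_pmf (\<lambda>f. card {i\<in>{..<n}. f i}) ?Q) {..<k}"
    by (simp add: measure_map_pmf)
  also have "map_pmf (\<lambda>f. card {i\<in>{..<n}. f i}) ?Q = binomial_pmf n q"
    using q by (intro binomial_pmf_altdef'[symmetric]) auto
  also have "measure_pmf.prob (binomial_pmf n q) {..<k} = 1 - binomial_tail n q k"
    unfolding binomial_tail_def using measure_pmf.prob_compl[of "{k..}" "binomial_pmf n q"]
    by (simp add: Compl_eq_Diff_UNIV[symmetric] Compl_atLeast)
  finally have not_covered: "measure_pmf.prob (map_pmf (\<lambda>f. f(n := False)) ?Q) ?E
      = 1 - binomial_tail n q k" .
  show ?thesis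
    unfolding split measure_bind_bernoulli_pmf[OF p] covered not_covered by simp
qed

lemma measure_covered_indicator_score:
  assumes D: "prob_space D"
    and C: "{x\<in>space (D \<Otimes>\<^sub>M unif01). C x} \<in> sets (D \<Otimes>\<^sub>M unif01)"
    and T: "{x\<in>space D. T x} \<in> sets D"
    and k: "0 < k" "k \<le> n"
  shows "measure (sample_space D n) {\<omega>\<in>space (sample_space D n).
           (if T (fst \<omega> n) then 0 else 1)
             \<le> kth_smallest k (map (\<lambda>i. if C (fst \<omega> i, snd \<omega> i) then 0 else 1) [0..<n])}
       = measure D {x\<in>space D. T x} + (1 - measure D {x\<in>space D. T x})
           * (1 - binomial_tail n (measure (D \<Otimes>\<^sub>M unif01) {x\<in>space (D \<Otimes>\<^sub>M unif01). C x}) k)"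
proof -
  interpret D: prob_space D by fact
  interpret DU: prob_space "D \<Otimes>\<^sub>M unif01"
    by (intro prob_space_pair D prob_space_unif01)
  have event: "{\<omega>\<in>space (sample_space D n).
           (if T (fst \<omega> n) then 0 else 1)
             \<le> kth_smallest k (map (\<lambda>i. if C (fst \<omega> i, snd \<omega> i) then 0 else 1) [0..<n])}
      = {\<omega>\<in>space (sample_space D n). outcome_pattern n C T \<omega> \<in> {\<tau>. \<tau> n \<or> card {i\<in>{..<n}. \<tau> i} < k}}"
  proof -
    have "{i\<in>{..<n}. outcome_pattern n C T \<omega> i} = {i\<in>{..<n}. C (fst \<omega> i, snd \<omega> i)}" for \<omega>
      by (auto simp: outcome_pattern_def)
    then show ?thesis
      using k by (auto simp: le_kth_smallest_indicators_iff outcome_pattern_def)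
  qed
  show ?thesis
    unfolding event measure_outcome_pattern_in[OF D C T]
    by (rule prob_Pi_bernoulli_covered) auto
qed

lemma conf_rank_pos: "\<alpha> < 1 \<Longrightarrow> 0 < conf_rank n \<alpha>"
  unfolding conf_rank_def by (simp add: mult_pos_pos)

lemma cov_clean_indicator_score:
  assumes D: "prob_space D" and Y: "snd \<in> measurable D LY" and A: "A \<in> sets LY"
    and k: "0 < conf_rank n \<alpha>" "conf_rank n \<alpha> \<le> n"
  defines "p \<equiv> measure D {z\<in>space D. snd z \<in> A}"
  shows "cov_clean D n \<alpha> (\<lambda>x y. if y \<in> A then 0 else 1)
       = p + (1 - p) * (1 - binomial_tail n p (conf_rank n \<alpha>))"
proof -
  have T: "{z\<in>space D. snd z \<in> A} \<in> sets D"
    using Y A by measurable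
  have "{x\<in>space (D \<Otimes>\<^sub>M unif01). snd (fst x) \<in> A} = {z\<in>space D. snd z \<in> A} \<times> space unif01"
    by (auto simp: space_pair_measure)
  then have C: "{x\<in>space (D \<Otimes>\<^sub>M unif01). snd (fst x) \<in> A} \<in> sets (D \<Otimes>\<^sub>M unif01)"
    and "measure (D \<Otimes>\<^sub>M unif01) {x\<in>space (D \<Otimes>\<^sub>M unif01). snd (fst x) \<in> A} = p"
    using T prob_space.emeasure_space_1[OF prob_space_unif01]
    by (auto simp: p_def measure_def prob_space_unif01 prob_space_imp_sigma_finite
        sigma_finite_measure.emeasure_pair_measure_Times)
  then show ?thesis
    unfolding cov_clean_def p_def
    using measure_covered_indicator_score[OF D C T k]
    by (simp add: case_prod_beta)
qed

lemma cov_noisy_indicator_score: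
  assumes D: "prob_space D" and Y: "snd \<in> measurable D LY"
    and g: "(\<lambda>(xy, u). g (snd xy) u) \<in> measurable (D \<Otimes>\<^sub>M unif01) LY" and A: "A \<in> sets LY"
    and k: "0 < conf_rank n \<alpha>" "conf_rank n \<alpha> \<le> n"
  defines "p \<equiv> measure D {z\<in>space D. snd z \<in> A}"
    and "q \<equiv> measure (D \<Otimes>\<^sub>M unif01) {x\<in>space (D \<Otimes>\<^sub>M unif01). g (snd (fst x)) (snd x) \<in> A}"
  shows "cov_noisy D g n \<alpha> (\<lambda>x y. if y \<in> A then 0 else 1)
       = p + (1 - p) * (1 - binomial_tail n q (conf_rank n \<alpha>))"
proof -
  have T: "{z\<in>space D. snd z \<in> A} \<in> sets D"
    using Y A by measurable
  have C: "{x\<in>space (D \<Otimes>\<^sub>M unif01). g (snd (fst x)) (snd x) \<in> A} \<in> sets (D \<Otimes>\<^sub>M unif01)"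
    using g A by measurable
  show ?thesis
    unfolding cov_noisy_def p_def q_def
    using measure_covered_indicator_score[OF D C T k]
    by (simp add: case_prod_beta)
qed

lemma (in prob_space) measure_less_if_neq:
  assumes N: "prob_space N" and sets: "sets N = sets M" and neq: "N \<noteq> M"
  obtains A where "A \<in> sets M" "prob A < measure N A"
proof -
  interpret N: prob_space N by fact
  have "\<exists>B\<in>sets M. emeasure M B \<noteq> emeasure N B"
    using measure_eqI[OF sets] neq unfolding sets by fastforce
  then obtain B where B: "B \<in> sets M" "emeasure M B \<noteq> emeasure N B" ..
  then have neq_prob: "prob B \<noteq> N.prob B"
    by (simp add: emeasure_eq_measure N.emeasure_eq_measure)
  show ?thesis
  proof (cases "prob B < N.prob B")
    case True
    then show ?thesis using that B(1) by blast
  next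
    case False
    have "prob (space M - B) = 1 - prob B" "N.prob (space M - B) = 1 - N.prob B"
      using B N.prob_compl[of B] sets sets_eq_imp_space_eq[OF sets] by (auto simp: prob_compl)
    then have "prob (space M - B) < N.prob (space M - B)"
      using False neq_prob by linarith
    then show ?thesis using that B(1) by blast
  qed
qed

lemma measurable_noisy_label:
  assumes "sets D = sets (LX \<Otimes>\<^sub>M LY)" "case_prod g \<in> measurable (LY \<Otimes>\<^sub>M borel) LY"
  shows "(\<lambda>(xy, u). g (snd xy) u) \<in> measurable (D \<Otimes>\<^sub>M unif01) LY"
proof -
  have "sets unif01 = sets borel" unfolding unif01_def by simp
  then have "measurable (D \<Otimes>\<^sub>M unif01) LY = measurable ((LX \<Otimes>\<^sub>M LY) \<Otimes>\<^sub>M borel) LY"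
    using assms(1) by (intro measurable_cong_sets sets_pair_measure_cong) auto
  moreover have "(\<lambda>(xy, u). g (snd xy) u) = case_prod g \<circ> (\<lambda>(xy, u). (snd xy, u))"
    by (auto simp: fun_eq_iff)
  ultimately show ?thesis
    using assms(2) by (simp add: measurable_comp)
qed

theorem mainTheorem6:
  fixes LX :: "'x measure" and LY :: "'y measure"
    and D :: "('x \<times> 'y) measure"
    and g :: "'y \<Rightarrow> real \<Rightarrow> 'y"
    and n :: nat and \<alpha> :: real
  assumes "prob_space D"
    and "sets D = sets (LX \<Otimes>\<^sub>M LY)"
    and "case_prod g \<in> measurable (LY \<Otimes>\<^sub>M borel) LY"
    and "0 < \<alpha>" and "\<alpha> < 1"
    and "conf_rank n \<alpha> \<le> n"
    and "distr (D \<Otimes>\<^sub>M unif01) LY (\<lambda>(xy, u). g (snd xy) u) \<noteq> distr D LY snd"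
  shows "\<exists>s :: 'x \<Rightarrow> 'y \<Rightarrow> real. case_prod s \<in> borel_measurable (LX \<Otimes>\<^sub>M LY) \<and>
           cov_noisy D g n \<alpha> s < cov_clean D n \<alpha> s"
proof -
  interpret D: prob_space D by fact
  interpret DU: prob_space "D \<Otimes>\<^sub>M unif01"
    by (intro prob_space_pair assms(1) prob_space_unif01)
  have Y: "snd \<in> measurable D LY"
    using assms(2) by (simp add: measurable_cong_sets[OF assms(2) refl])
  note noisy = measurable_noisy_label[OF assms(2,3)]
  obtain A where A: "A \<in> sets LY" and less:
    "measure (distr D LY snd) A < measure (distr (D \<Otimes>\<^sub>M unif01) LY (\<lambda>(xy, u). g (snd xy) u)) A"
    using prob_space.measure_less_if_neq[OF D.prob_space_distr[OF Y] DU.prob_space_distr[OF noisy]]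
      assms(7) by auto
  define p where "p = measure D {z\<in>space D. snd z \<in> A}"
  define q where "q = measure (D \<Otimes>\<^sub>M unif01) {x\<in>space (D \<Otimes>\<^sub>M unif01). g (snd (fst x)) (snd x) \<in> A}"
  have "p < q"
    using less A Y noisy
    by (simp add: p_def q_def measure_distr vimage_def Int_def conj_commute case_prod_beta)
  moreover have "0 \<le> p" "q \<le> 1"
    by (simp_all add: p_def q_def)
  ultimately have "binomial_tail n p (conf_rank n \<alpha>) < binomial_tail n q (conf_rank n \<alpha>)"
    using conf_rank_pos[OF assms(5)] assms(6) by (intro binomial_tail_strict_mono) auto
  moreover have "p < 1" using \<open>p < q\<close> \<open>q \<le> 1\<close> by simp
  ultimately have "cov_noisy D g n \<alpha> (\<lambda>x y. if y \<in> A then 0 else 1)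
      < cov_clean D n \<alpha> (\<lambda>x y. if y \<in> A then 0 else 1)"
    unfolding p_def q_def
    using conf_rank_pos[OF assms(5)] assms(6)
    by (simp add: cov_clean_indicator_score[OF assms(1) Y A] cov_noisy_indicator_score[OF assms(1) Y noisy A])
  moreover have "(\<lambda>(x, y). if y \<in> A then 0 else 1 :: real) \<in> borel_measurable (LX \<Otimes>\<^sub>M LY)"
    using A by measurable
  ultimately show ?thesis
    by (intro exI[of _ "\<lambda>x y. if y \<in> A then 0 else 1"]) (simp add: case_prod_beta)
qed

end
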